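(* Assume (A1), (A2) and (A4) of the context, and let the chain $(\bar z_k)_{k\ge0}$ start from an arbitrary initial distribution. For $n\ge1$ let $$\Sigma_n=\frac1n\sum_{k=1}^nG^{-1}\mathsf E\big[(g(\bar z_k)-\bar{\mathrm P}g(\bar z_{k-1}))(g(\bar z_k)-\bar{\mathrm P}g(\bar z_{k-1}))^\top\big]G^{-\top}.$$ Then, with an absolute constant $C$, $$\|\Sigma_n-\Sigma_\infty\|_{\mathrm{ch}}\le C\,\frac{\|G^{-1}\|_\infty^2\,t_{\mathrm{mix}}^3}{n(1-\gamma)^2}.$$
   Context: Finite $\mathcal S,\mathcal A$, $d=|\mathcal S||\mathcal A|$. (A1) deterministic reward $r\in[0,1]$, discount $\gamma\in(0,1)$, kernel $\mathrm P$; $Q^\star$ optimal, $V^\star(s)=\max_aQ^\star(s,a)$. Behavior policy $\pi_b$; $\mu$ stationary law of $(s_t,a_t)$ (with $\min\mu>0$), $D_\mu=\operatorname{diag}(\mu)$; $\bar z_t=(s_t,a_t,s_{t+1})$ is Markov on $\mathsf X=\mathcal S\times\mathcal A\times\mathcal S$ with kernel $\bar{\mathrm P}((s_2,a_2,s_2')\mid(s_1,a_1,s_1'))=\mathbf 1\{s_2=s_1'\}\pi_b(a_2\mid s_2)\mathrm P(s_2'\mid s_2,a_2)$, stationary law $\bar\mu$. (A2) $d_{\mathrm{tv}}(\bar{\mathrm P}^t(\cdot\mid x),\bar\mu)\le(1/4)^{\lfloor t/t_{\mathrm{mix}}\rfloor}$. (A4) unique optimal deterministic policy $\pi^\star$ with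 positive optimality gap. $\mathrm P^{\pi^\star}((s,a),(s',a'))=\mathrm P(s'\mid s,a)\mathbf 1\{a'=\pi^\star(s')\}$, $G=D_\mu(I-\gamma\mathrm P^{\pi^\star})$. Bellman noise $\boldsymbol\varepsilon(s,a,s')=e_{s,a}(r(s,a)+\gamma V^\star(s')-Q^\star(s,a))$; $g=\sum_{k\ge0}\bar{\mathrm P}^k\boldsymbol\varepsilon$ solves $g-\bar{\mathrm P}g=\boldsymbol\varepsilon$. $\Sigma_{\boldsymbol\varepsilon}=\mathsf E_{\bar\mu}[\boldsymbol\varepsilon_0\boldsymbol\varepsilon_0^\top]+\sum_{\ell\ge1}(\mathsf E_{\bar\mu}[\boldsymbol\varepsilon_0\boldsymbol\varepsilon_\ell^\top]+\mathsf E_{\bar\mu}[\boldsymbol\varepsilon_\ell\boldsymbol\varepsilon_0^\top])$ (long-run covariance along the stationary chain, $\boldsymbol\varepsilon_\ell=\boldsymbol\varepsilon(\bar z_\ell)$), $\Sigma_\infty=G^{-1}\Sigma_{\boldsymbol\varepsilon}G^{-\top}$. $\|M\|_{\mathrm{ch}}=\max_{i,j}|M_{ij}|$; $\|G^{-1}\|_\infty$ is the induced $\ell_\infty$ operator norm. *)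

theory Defs
  imports "HOL-Analysis.Analysis"
begin

text \<open>States and actions are natural numbers drawn from finite nonempty carriers S, A.
  Vectors/matrices indexed by S x A are functions on nat x nat restricted to S x A.
  The chain zbar_t = (s_t,a_t,s_{t+1}) lives on X = S x A x S.\<close>

definition finite_mdp ::
  "nat set \<Rightarrow> nat set \<Rightarrow> (nat \<Rightarrow> nat \<Rightarrow> nat \<Rightarrow> real) \<Rightarrow> (nat \<Rightarrow> nat \<Rightarrow> real) \<Rightarrow> real
   \<Rightarrow> (nat \<Rightarrow> nat \<Rightarrow> real) \<Rightarrow> bool" where
  "finite_mdp S A P r \<gamma> pib \<longleftrightarrow>
     finite S \<and> finite A \<and> S \<noteq> {} \<and> A \<noteq> {} \<and> 0 < \<gamma> \<and> \<gamma> < 1 \<and>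
     (\<forall>s\<in>S. \<forall>a\<in>A. 0 \<le> r s a \<and> r s a \<le> 1) \<and>
     (\<forall>s\<in>S. \<forall>a\<in>A. (\<forall>s'\<in>S. 0 \<le> P s a s') \<and> (\<Sum>s'\<in>S. P s a s') = 1) \<and>
     (\<forall>s\<in>S. (\<forall>a\<in>A. 0 \<le> pib s a) \<and> (\<Sum>a\<in>A. pib s a) = 1)"

definition is_optimal_Q ::
  "nat set \<Rightarrow> nat set \<Rightarrow> (nat \<Rightarrow> nat \<Rightarrow> nat \<Rightarrow> real) \<Rightarrow> (nat \<Rightarrow> nat \<Rightarrow> real) \<Rightarrow> real
   \<Rightarrow> (nat \<Rightarrow> nat \<Rightarrow> real) \<Rightarrow> bool" where
  "is_optimal_Q S A P r \<gamma> Q \<longleftrightarrow>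
     (\<forall>s\<in>S. \<forall>a\<in>A. Q s a = r s a + \<gamma> * (\<Sum>s'\<in>S. P s a s' * Max ((\<lambda>a'. Q s' a') ` A)))"

definition Vstar :: "nat set \<Rightarrow> (nat \<Rightarrow> nat \<Rightarrow> real) \<Rightarrow> nat \<Rightarrow> real" where
  "Vstar A Q s = Max ((\<lambda>a. Q s a) ` A)"

text \<open>(A4): unique optimal deterministic policy with positive optimality gap.\<close>
definition unique_opt_policy :: "nat set \<Rightarrow> nat set \<Rightarrow> (nat \<Rightarrow> nat \<Rightarrow> real) \<Rightarrow> bool" where
  "unique_opt_policy S A Q \<longleftrightarrow>
     (\<forall>s\<in>S. \<exists>a\<in>A. \<forall>a'\<in>A. a' \<noteq> a \<longrightarrow> Q s a' < Q s a)"

definition pistar :: "nat set \<Rightarrow> (nat \<Rightarrow> nat \<Rightarrow> real) \<Rightarrow> nat \<Rightarrow> nat" where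
  "pistar A Q s = (THE a. a \<in> A \<and> (\<forall>a'\<in>A. a' \<noteq> a \<longrightarrow> Q s a' < Q s a))"

definition stationary_sa ::
  "nat set \<Rightarrow> nat set \<Rightarrow> (nat \<Rightarrow> nat \<Rightarrow> nat \<Rightarrow> real) \<Rightarrow> (nat \<Rightarrow> nat \<Rightarrow> real)
   \<Rightarrow> (nat \<times> nat \<Rightarrow> real) \<Rightarrow> bool" where
  "stationary_sa S A P pib \<mu> \<longleftrightarrow>
     (\<forall>i\<in>S \<times> A. 0 < \<mu> i) \<and> (\<Sum>i\<in>S \<times> A. \<mu> i) = 1 \<and>
     (\<forall>s'\<in>S. \<forall>a'\<in>A. \<mu> (s', a') = (\<Sum>(s, a)\<in>S \<times> A. \<mu> (s, a) * P s a s' * pib s' a'))"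

definition Xset :: "nat set \<Rightarrow> nat set \<Rightarrow> (nat \<times> nat \<times> nat) set" where
  "Xset S A = S \<times> A \<times> S"

definition Pbar ::
  "(nat \<Rightarrow> nat \<Rightarrow> nat \<Rightarrow> real) \<Rightarrow> (nat \<Rightarrow> nat \<Rightarrow> real)
   \<Rightarrow> nat \<times> nat \<times> nat \<Rightarrow> nat \<times> nat \<times> nat \<Rightarrow> real" where
  "Pbar P pib x y =
     (case x of (s1, a1, s1') \<Rightarrow> case y of (s2, a2, s2') \<Rightarrow>
        (if s2 = s1' then pib s2 a2 * P s2 a2 s2' else 0))"

fun kpow ::
  "(nat \<times> nat \<times> nat) set \<Rightarrow> (nat \<times> nat \<times> nat \<Rightarrow> nat \<times> nat \<times> nat \<Rightarrow> real)
   \<Rightarrow> nat \<Rightarrow> nat \<times> nat \<times> nat \<Rightarrow> nat \<times> nat \<times> nat \<Rightarrow> real" where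
  "kpow X K 0 x y = (if x = y then 1 else 0)"
| "kpow X K (Suc t) x y = (\<Sum>z\<in>X. kpow X K t x z * K z y)"

definition mubar :: "(nat \<Rightarrow> nat \<Rightarrow> nat \<Rightarrow> real) \<Rightarrow> (nat \<times> nat \<Rightarrow> real) \<Rightarrow> nat \<times> nat \<times> nat \<Rightarrow> real" where
  "mubar P \<mu> x = (case x of (s, a, s') \<Rightarrow> \<mu> (s, a) * P s a s')"

definition dtv :: "'x set \<Rightarrow> ('x \<Rightarrow> real) \<Rightarrow> ('x \<Rightarrow> real) \<Rightarrow> real" where
  "dtv X p q = (1/2) * (\<Sum>y\<in>X. \<bar>p y - q y\<bar>)"

text \<open>(A2): uniform geometric mixing with mixing time tmix (a positive integer).\<close>
definition mixing ::
  "nat set \<Rightarrow> nat set \<Rightarrow> (nat \<Rightarrow> nat \<Rightarrow> nat \<Rightarrow> real) \<Rightarrow> (nat \<Rightarrow> nat \<Rightarrow> real)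
   \<Rightarrow> (nat \<times> nat \<Rightarrow> real) \<Rightarrow> nat \<Rightarrow> bool" where
  "mixing S A P pib \<mu> tmix \<longleftrightarrow> 0 < tmix \<and>
     (\<forall>t. \<forall>x\<in>Xset S A.
        dtv (Xset S A) (kpow (Xset S A) (Pbar P pib) t x) (mubar P \<mu>)
          \<le> (1/4) ^ (t div tmix))"

definition eps ::
  "nat set \<Rightarrow> (nat \<Rightarrow> nat \<Rightarrow> real) \<Rightarrow> real \<Rightarrow> (nat \<Rightarrow> nat \<Rightarrow> real)
   \<Rightarrow> nat \<times> nat \<times> nat \<Rightarrow> nat \<times> nat \<Rightarrow> real" where
  "eps A r \<gamma> Q x j = (case x of (s, a, s') \<Rightarrow>
      (if j = (s, a) then r s a + \<gamma> * Vstar A Q s' - Q s a else 0))"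

definition gfun ::
  "nat set \<Rightarrow> nat set \<Rightarrow> (nat \<Rightarrow> nat \<Rightarrow> nat \<Rightarrow> real) \<Rightarrow> (nat \<Rightarrow> nat \<Rightarrow> real) \<Rightarrow> real
   \<Rightarrow> (nat \<Rightarrow> nat \<Rightarrow> real) \<Rightarrow> (nat \<Rightarrow> nat \<Rightarrow> real) \<Rightarrow> nat \<times> nat \<times> nat \<Rightarrow> nat \<times> nat \<Rightarrow> real" where
  "gfun S A P r \<gamma> pib Q x j =
     (\<Sum>k. \<Sum>y\<in>Xset S A. kpow (Xset S A) (Pbar P pib) k x y * eps A r \<gamma> Q y j)"

definition Pg ::
  "nat set \<Rightarrow> nat set \<Rightarrow> (nat \<Rightarrow> nat \<Rightarrow> nat \<Rightarrow> real) \<Rightarrow> (nat \<Rightarrow> nat \<Rightarrow> real) \<Rightarrow> real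
   \<Rightarrow> (nat \<Rightarrow> nat \<Rightarrow> real) \<Rightarrow> (nat \<Rightarrow> nat \<Rightarrow> real) \<Rightarrow> nat \<times> nat \<times> nat \<Rightarrow> nat \<times> nat \<Rightarrow> real" where
  "Pg S A P r \<gamma> pib Q x j =
     (\<Sum>y\<in>Xset S A. Pbar P pib x y * gfun S A P r \<gamma> pib Q y j)"

definition Ppistar ::
  "nat set \<Rightarrow> (nat \<Rightarrow> nat \<Rightarrow> nat \<Rightarrow> real) \<Rightarrow> (nat \<Rightarrow> nat \<Rightarrow> real)
   \<Rightarrow> nat \<times> nat \<Rightarrow> nat \<times> nat \<Rightarrow> real" where
  "Ppistar A P Q i j = (case i of (s, a) \<Rightarrow> case j of (s', a') \<Rightarrow>
      P s a s' * (if a' = pistar A Q s' then 1 else 0))"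

definition Gmat ::
  "nat set \<Rightarrow> (nat \<Rightarrow> nat \<Rightarrow> nat \<Rightarrow> real) \<Rightarrow> real \<Rightarrow> (nat \<Rightarrow> nat \<Rightarrow> real)
   \<Rightarrow> (nat \<times> nat \<Rightarrow> real) \<Rightarrow> nat \<times> nat \<Rightarrow> nat \<times> nat \<Rightarrow> real" where
  "Gmat A P \<gamma> Q \<mu> i j = \<mu> i * ((if i = j then 1 else 0) - \<gamma> * Ppistar A P Q i j)"

definition minv :: "'i set \<Rightarrow> ('i \<Rightarrow> 'i \<Rightarrow> real) \<Rightarrow> 'i \<Rightarrow> 'i \<Rightarrow> real" where
  "minv I M = (SOME N.
      (\<forall>i\<in>I. \<forall>j\<in>I. (\<Sum>k\<in>I. M i k * N k j) = (if i = j then 1 else 0)) \<and>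
      (\<forall>i\<in>I. \<forall>j\<in>I. (\<Sum>k\<in>I. N i k * M k j) = (if i = j then 1 else 0)))"

definition congr :: "'i set \<Rightarrow> ('i \<Rightarrow> 'i \<Rightarrow> real) \<Rightarrow> ('i \<Rightarrow> 'i \<Rightarrow> real) \<Rightarrow> 'i \<Rightarrow> 'i \<Rightarrow> real" where
  "congr I B M i j = (\<Sum>p\<in>I. \<Sum>q\<in>I. B i p * M p q * B j q)"

definition chnorm :: "'i set \<Rightarrow> ('i \<Rightarrow> 'i \<Rightarrow> real) \<Rightarrow> real" where
  "chnorm I M = Max ((\<lambda>(i, j). \<bar>M i j\<bar>) ` (I \<times> I))"

definition linf_opnorm :: "'i set \<Rightarrow> ('i \<Rightarrow> 'i \<Rightarrow> real) \<Rightarrow> real" where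
  "linf_opnorm I M =
     Sup ((\<lambda>v. Max ((\<lambda>i. \<bar>\<Sum>j\<in>I. M i j * v j\<bar>) ` I)) ` {v. \<forall>i\<in>I. \<bar>v i\<bar> \<le> 1})"

definition Sigma_eps ::
  "nat set \<Rightarrow> nat set \<Rightarrow> (nat \<Rightarrow> nat \<Rightarrow> nat \<Rightarrow> real) \<Rightarrow> (nat \<Rightarrow> nat \<Rightarrow> real) \<Rightarrow> real
   \<Rightarrow> (nat \<Rightarrow> nat \<Rightarrow> real) \<Rightarrow> (nat \<Rightarrow> nat \<Rightarrow> real) \<Rightarrow> (nat \<times> nat \<Rightarrow> real)
   \<Rightarrow> nat \<times> nat \<Rightarrow> nat \<times> nat \<Rightarrow> real" where
  "Sigma_eps S A P r \<gamma> pib Q \<mu> i j =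
     (\<Sum>x\<in>Xset S A. mubar P \<mu> x * eps A r \<gamma> Q x i * eps A r \<gamma> Q x j)
     + (\<Sum>l. \<Sum>x\<in>Xset S A. \<Sum>y\<in>Xset S A.
          mubar P \<mu> x * kpow (Xset S A) (Pbar P pib) (Suc l) x y *
          (eps A r \<gamma> Q x i * eps A r \<gamma> Q y j + eps A r \<gamma> Q y i * eps A r \<gamma> Q x j))"

definition Sigma_inf ::
  "nat set \<Rightarrow> nat set \<Rightarrow> (nat \<Rightarrow> nat \<Rightarrow> nat \<Rightarrow> real) \<Rightarrow> (nat \<Rightarrow> nat \<Rightarrow> real) \<Rightarrow> real
   \<Rightarrow> (nat \<Rightarrow> nat \<Rightarrow> real) \<Rightarrow> (nat \<Rightarrow> nat \<Rightarrow> real) \<Rightarrow> (nat \<times> nat \<Rightarrow> real)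
   \<Rightarrow> nat \<times> nat \<Rightarrow> nat \<times> nat \<Rightarrow> real" where
  "Sigma_inf S A P r \<gamma> pib Q \<mu> =
     congr (S \<times> A) (minv (S \<times> A) (Gmat A P \<gamma> Q \<mu>)) (Sigma_eps S A P r \<gamma> pib Q \<mu>)"

definition is_distr :: "'x set \<Rightarrow> ('x \<Rightarrow> real) \<Rightarrow> bool" where
  "is_distr X \<nu> \<longleftrightarrow> (\<forall>x\<in>X. 0 \<le> \<nu> x) \<and> (\<Sum>x\<in>X. \<nu> x) = 1"

definition law ::
  "nat set \<Rightarrow> nat set \<Rightarrow> (nat \<Rightarrow> nat \<Rightarrow> nat \<Rightarrow> real) \<Rightarrow> (nat \<Rightarrow> nat \<Rightarrow> real)
   \<Rightarrow> (nat \<times> nat \<times> nat \<Rightarrow> real) \<Rightarrow> nat \<Rightarrow> nat \<times> nat \<times> nat \<Rightarrow> real" where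
  "law S A P pib \<nu> k y = (\<Sum>x\<in>Xset S A. \<nu> x * kpow (Xset S A) (Pbar P pib) k x y)"

definition Ek ::
  "nat set \<Rightarrow> nat set \<Rightarrow> (nat \<Rightarrow> nat \<Rightarrow> nat \<Rightarrow> real) \<Rightarrow> (nat \<Rightarrow> nat \<Rightarrow> real) \<Rightarrow> real
   \<Rightarrow> (nat \<Rightarrow> nat \<Rightarrow> real) \<Rightarrow> (nat \<Rightarrow> nat \<Rightarrow> real) \<Rightarrow> (nat \<times> nat \<times> nat \<Rightarrow> real) \<Rightarrow> nat
   \<Rightarrow> nat \<times> nat \<Rightarrow> nat \<times> nat \<Rightarrow> real" where
  "Ek S A P r \<gamma> pib Q \<nu> k i j =
     (\<Sum>x\<in>Xset S A. \<Sum>y\<in>Xset S A.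
        law S A P pib \<nu> (k - 1) x * Pbar P pib x y *
        (gfun S A P r \<gamma> pib Q y i - Pg S A P r \<gamma> pib Q x i) *
        (gfun S A P r \<gamma> pib Q y j - Pg S A P r \<gamma> pib Q x j))"

definition Sigma_n ::
  "nat set \<Rightarrow> nat set \<Rightarrow> (nat \<Rightarrow> nat \<Rightarrow> nat \<Rightarrow> real) \<Rightarrow> (nat \<Rightarrow> nat \<Rightarrow> real) \<Rightarrow> real
   \<Rightarrow> (nat \<Rightarrow> nat \<Rightarrow> real) \<Rightarrow> (nat \<Rightarrow> nat \<Rightarrow> real) \<Rightarrow> (nat \<times> nat \<Rightarrow> real)
   \<Rightarrow> (nat \<times> nat \<times> nat \<Rightarrow> real) \<Rightarrow> nat \<Rightarrow> nat \<times> nat \<Rightarrow> nat \<times> nat \<Rightarrow> real" where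
  "Sigma_n S A P r \<gamma> pib Q \<mu> \<nu> n i j =
     (1 / real n) * (\<Sum>k=1..n.
        congr (S \<times> A) (minv (S \<times> A) (Gmat A P \<gamma> Q \<mu>)) (Ek S A P r \<gamma> pib Q \<nu> k) i j)"

end

theory Submission
  imports Defs
begin

text \<open>The Poisson solution g turns the Bellman noise into the martingale increments
  g(z_k) - Pbar g(z_{k-1}). Under the stationary law the covariance of one increment equals the
  long-run covariance Sigma_eps, as one sees by expanding g = sum_k Pbar^k eps. Uniform mixing gives
  |g| <= 4 t_mix / (1 - gamma), so every increment covariance is at most (8 t_mix / (1 - gamma))^2,
  and its expectation under the law of z_{k-1} is within 2 * 4^(-floor((k-1)/t_mix)) times that
  of the stationary one. These errors sum to at most 2 t_mix times the bound, and the congruence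
  by G^{-1} costs the factor |G^{-1}|_inf^2 entrywise. Nothing about G is used beyond Sigma_n and
  Sigma_inf being congruences by the same matrix.\<close>

lemma sum_quarter_pow_div_le:
  assumes "0 < (\<tau>::nat)"
  shows "(\<Sum>k<N. (1/4::real) ^ (k div \<tau>)) \<le> 2 * real \<tau>"
proof -
  have block: "(\<Sum>k\<in>{j * \<tau>..<j * \<tau> + \<tau>}. (1/4::real) ^ (k div \<tau>)) = real \<tau> * (1/4) ^ j" for j
  proof -
    have "k div \<tau> = j" if "k \<in> {j * \<tau>..<j * \<tau> + \<tau>}" for k
      using that by (intro div_nat_eqI) (auto simp: algebra_simps)
    then show ?thesis by simp
  qed
  have "(\<Sum>k<N. (1/4::real) ^ (k div \<tau>)) \<le> (\<Sum>k<N * \<tau>. (1/4::real) ^ (k div \<tau>))"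
    using assms by (intro sum_mono2) auto
  also have "\<dots> = (\<Sum>j<N. real \<tau> * (1/4) ^ j)"
    by (simp only: sum.nat_group[symmetric] block)
  also have "\<dots> = real \<tau> * (\<Sum>j<N. (1/4::real) ^ j)"
    by (simp add: sum_distrib_left)
  also have "\<dots> \<le> real \<tau> * 2"
    using geometric_sum_less[of "1/4::real" "{..<N}"] by (intro mult_left_mono) auto
  finally show ?thesis by simp
qed

lemma summable_quarter_pow_div: "0 < (\<tau>::nat) \<Longrightarrow> summable (\<lambda>k. (1/4::real) ^ (k div \<tau>))"
  by (rule summableI_nonneg_bounded[where x = "2 * real \<tau>"]) (auto intro: sum_quarter_pow_div_le)

lemma suminf_quarter_pow_div_le: "0 < (\<tau>::nat) \<Longrightarrow> (\<Sum>k. (1/4::real) ^ (k div \<tau>)) \<le> 2 * real \<tau>"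
  by (rule suminf_le_const) (auto intro: summable_quarter_pow_div sum_quarter_pow_div_le)

lemma abs_sum_mult_diff_le:
  fixes F :: "'x \<Rightarrow> real"
  assumes "\<And>x. x \<in> X \<Longrightarrow> \<bar>F x\<bar> \<le> B"
  shows "\<bar>(\<Sum>x\<in>X. p x * F x) - (\<Sum>x\<in>X. q x * F x)\<bar> \<le> (\<Sum>x\<in>X. \<bar>p x - q x\<bar>) * B"
proof -
  have "\<bar>(\<Sum>x\<in>X. p x * F x) - (\<Sum>x\<in>X. q x * F x)\<bar> = \<bar>\<Sum>x\<in>X. (p x - q x) * F x\<bar>"
    by (simp add: sum_subtractf left_diff_distrib)
  also have "\<dots> \<le> (\<Sum>x\<in>X. \<bar>p x - q x\<bar> * B)"
    by (rule order_trans[OF sum_abs]) (auto simp: abs_mult assms intro!: sum_mono mult_left_mono)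
  finally show ?thesis by (simp add: sum_distrib_right)
qed

lemma sum_convex_comb_between:
  assumes "\<And>s. s \<in> S \<Longrightarrow> 0 \<le> w s" and "(\<Sum>s\<in>S. w s) = 1"
    and "\<And>s. s \<in> S \<Longrightarrow> lo \<le> v s \<and> v s \<le> (hi::real)"
  shows "lo \<le> (\<Sum>s\<in>S. w s * v s) \<and> (\<Sum>s\<in>S. w s * v s) \<le> hi"
proof -
  have "(\<Sum>s\<in>S. w s * lo) \<le> (\<Sum>s\<in>S. w s * v s)" and "(\<Sum>s\<in>S. w s * v s) \<le> (\<Sum>s\<in>S. w s * hi)"
    using assms(1,3) by (auto intro!: sum_mono mult_left_mono)
  moreover have "(\<Sum>s\<in>S. w s * lo) = lo" and "(\<Sum>s\<in>S. w s * hi) = hi"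
    using assms(2) by (simp_all add: sum_distrib_right[symmetric])
  ultimately show ?thesis
    by simp
qed

lemma Max_image_between:
  assumes "finite A" and "A \<noteq> {}" and "\<And>a. a \<in> A \<Longrightarrow> lo \<le> q a \<and> q a \<le> (hi::real)"
  shows "lo \<le> Max (q ` A) \<and> Max (q ` A) \<le> hi"
proof -
  have "Max (q ` A) \<in> q ` A"
    using assms(1,2) by (intro Max_in) auto
  then obtain a where "a \<in> A" and "Max (q ` A) = q a"
    by blast
  then show ?thesis using assms(3) by simp
qed

section \<open>The Poisson equation of a uniformly mixing chain\<close>

locale mixing_chain =
  fixes X :: "(nat \<times> nat \<times> nat) set"
    and K :: "nat \<times> nat \<times> nat \<Rightarrow> nat \<times> nat \<times> nat \<Rightarrow> real"
    and m :: "nat \<times> nat \<times> nat \<Rightarrow> real"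
    and \<tau> :: nat
  assumes finite_X: "finite X"
    and K_nonneg: "\<And>x y. x \<in> X \<Longrightarrow> y \<in> X \<Longrightarrow> 0 \<le> K x y"
    and K_row_sum: "\<And>x. x \<in> X \<Longrightarrow> (\<Sum>y\<in>X. K x y) = 1"
    and m_stationary: "\<And>y. y \<in> X \<Longrightarrow> (\<Sum>x\<in>X. m x * K x y) = m y"
    and mixing_l1: "\<And>t x. x \<in> X \<Longrightarrow> (\<Sum>y\<in>X. \<bar>kpow X K t x y - m y\<bar>) \<le> 2 * (1/4) ^ (t div \<tau>)"
    and \<tau>_pos: "0 < \<tau>"
begin

definition Kapp :: "(nat \<times> nat \<times> nat \<Rightarrow> real) \<Rightarrow> nat \<times> nat \<times> nat \<Rightarrow> real" where
  "Kapp u x = (\<Sum>y\<in>X. K x y * u y)"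

definition Kpow :: "nat \<Rightarrow> (nat \<times> nat \<times> nat \<Rightarrow> real) \<Rightarrow> nat \<times> nat \<times> nat \<Rightarrow> real" where
  "Kpow k u x = (\<Sum>y\<in>X. kpow X K k x y * u y)"

definition poisson :: "(nat \<times> nat \<times> nat \<Rightarrow> real) \<Rightarrow> nat \<times> nat \<times> nat \<Rightarrow> real" where
  "poisson f x = (\<Sum>k. Kpow k f x)"

text \<open>The conditional covariance, given z_{k-1} = x, of the martingale increment
  g(z_k) - Pbar g(z_{k-1}) with g = poisson f.\<close>
definition incr_cov ::
  "(nat \<times> nat \<times> nat \<Rightarrow> real) \<Rightarrow> (nat \<times> nat \<times> nat \<Rightarrow> real) \<Rightarrow> nat \<times> nat \<times> nat \<Rightarrow> real" where
  "incr_cov f h x =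
     (\<Sum>y\<in>X. K x y * (poisson f y - Kapp (poisson f) x) * (poisson h y - Kapp (poisson h) x))"

lemma Kapp_const: "x \<in> X \<Longrightarrow> Kapp (\<lambda>_. c) x = c"
  unfolding Kapp_def by (simp add: sum_distrib_right[symmetric] K_row_sum)

lemma Kapp_abs_le:
  assumes "x \<in> X" and "\<And>y. y \<in> X \<Longrightarrow> \<bar>u y\<bar> \<le> B"
  shows "\<bar>Kapp u x\<bar> \<le> B"
proof -
  have "\<bar>Kapp u x\<bar> \<le> Kapp (\<lambda>_. B) x"
    unfolding Kapp_def
    by (rule order_trans[OF sum_abs])
       (auto simp: abs_mult K_nonneg assms intro!: sum_mono mult_left_mono)
  then show ?thesis using Kapp_const[OF assms(1)] by simp
qed

lemma sum_stationary_Kapp: "(\<Sum>x\<in>X. m x * Kapp u x) = (\<Sum>y\<in>X. m y * u y)"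
proof -
  have "(\<Sum>x\<in>X. m x * Kapp u x) = (\<Sum>y\<in>X. \<Sum>x\<in>X. m x * K x y * u y)"
    unfolding Kapp_def by (subst sum.swap) (simp add: sum_distrib_left mult.assoc)
  also have "\<dots> = (\<Sum>y\<in>X. m y * u y)"
    by (intro sum.cong refl) (simp add: sum_distrib_right[symmetric] m_stationary)
  finally show ?thesis .
qed

lemma kpow_Suc_left:
  assumes "x \<in> X" and "w \<in> X"
  shows "kpow X K (Suc t) x w = (\<Sum>y\<in>X. K x y * kpow X K t y w)"
  using assms(2)
proof (induction t arbitrary: w)
  case 0
  then show ?case using assms(1) finite_X by (simp add: of_bool_def[symmetric])
next
  case (Suc t)
  have "kpow X K (Suc (Suc t)) x w = (\<Sum>z\<in>X. kpow X K (Suc t) x z * K z w)"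
    by (rule kpow.simps(2))
  also have "\<dots> = (\<Sum>z\<in>X. (\<Sum>y\<in>X. K x y * kpow X K t y z) * K z w)"
    by (intro sum.cong refl) (simp add: Suc.IH del: kpow.simps)
  also have "\<dots> = (\<Sum>y\<in>X. K x y * kpow X K (Suc t) y w)"
    by (simp add: sum_distrib_left sum_distrib_right mult.assoc) (rule sum.swap)
  finally show ?case .
qed

lemma Kpow_0: "x \<in> X \<Longrightarrow> Kpow 0 u x = u x"
  unfolding Kpow_def using finite_X by (simp add: of_bool_def[symmetric])

lemma Kpow_Suc: "x \<in> X \<Longrightarrow> Kpow (Suc k) u x = Kapp (Kpow k u) x"
  unfolding Kpow_def Kapp_def
  by (simp add: kpow_Suc_left sum_distrib_left sum_distrib_right mult.assoc cong: sum.cong del: kpow.simps)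
     (rule sum.swap)

context
  fixes f :: "nat \<times> nat \<times> nat \<Rightarrow> real" and M :: real
  assumes f_bounded: "\<And>y. y \<in> X \<Longrightarrow> \<bar>f y\<bar> \<le> M"
    and f_centered: "(\<Sum>y\<in>X. m y * f y) = 0"
begin

lemma f_bound_nonneg: "x \<in> X \<Longrightarrow> 0 \<le> M"
  using abs_ge_zero f_bounded by (rule order_trans)

lemma Kpow_centered_abs_le:
  assumes "x \<in> X"
  shows "\<bar>Kpow k f x\<bar> \<le> 2 * M * (1/4) ^ (k div \<tau>)"
proof -
  have "\<bar>Kpow k f x\<bar> \<le> (\<Sum>y\<in>X. \<bar>kpow X K k x y - m y\<bar>) * M"
    using abs_sum_mult_diff_le[of X f M "kpow X K k x" m] f_bounded f_centered
    unfolding Kpow_def by (simp add: ac_simps)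
  also have "\<dots> \<le> 2 * (1/4) ^ (k div \<tau>) * M"
    using f_bound_nonneg[OF assms] by (intro mult_right_mono mixing_l1 assms)
  finally show ?thesis by (simp add: mult_ac)
qed

lemma summable_Kpow_centered:
  assumes "x \<in> X"
  shows "summable (\<lambda>k. Kpow k f x)"
proof (rule summable_comparison_test')
  show "summable (\<lambda>k. 2 * M * (1/4::real) ^ (k div \<tau>))"
    by (intro summable_mult summable_quarter_pow_div \<tau>_pos)
  show "norm (Kpow k f x) \<le> 2 * M * (1/4) ^ (k div \<tau>)" for k
    using Kpow_centered_abs_le[OF assms] by simp
qed

lemma poisson_abs_le:
  assumes "x \<in> X"
  shows "\<bar>poisson f x\<bar> \<le> 4 * M * \<tau>"
proof -
  have "\<bar>poisson f x\<bar> \<le> (\<Sum>k. 2 * M * (1/4::real) ^ (k div \<tau>))"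
    unfolding poisson_def real_norm_def[symmetric] using Kpow_centered_abs_le[OF assms]
    by (intro norm_suminf_le summable_mult summable_quarter_pow_div \<tau>_pos) simp
  also have "\<dots> = 2 * M * (\<Sum>k. (1/4::real) ^ (k div \<tau>))"
    by (rule suminf_mult[OF summable_quarter_pow_div[OF \<tau>_pos]])
  also have "\<dots> \<le> 2 * M * (2 * real \<tau>)"
    using f_bound_nonneg[OF assms] by (intro mult_left_mono suminf_quarter_pow_div_le \<tau>_pos) simp
  finally show ?thesis by simp
qed

lemma poisson_equation:
  assumes "x \<in> X"
  shows "Kapp (poisson f) x = poisson f x - f x"
proof -
  have "Kapp (poisson f) x = (\<Sum>y\<in>X. \<Sum>k. K x y * Kpow k f y)"
    unfolding Kapp_def poisson_def by (intro sum.cong refl suminf_mult[symmetric] summable_Kpow_centered)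
  also have "\<dots> = (\<Sum>k. Kapp (Kpow k f) x)"
    unfolding Kapp_def by (intro suminf_sum[symmetric] summable_mult summable_Kpow_centered) simp
  also have "\<dots> = (\<Sum>k. Kpow (Suc k) f x)"
    by (simp add: Kpow_Suc[OF assms])
  also have "\<dots> = poisson f x - Kpow 0 f x"
    unfolding poisson_def by (rule suminf_split_head[OF summable_Kpow_centered[OF assms]])
  finally show ?thesis by (simp add: Kpow_0[OF assms])
qed

lemma summable_stationary_Kpow_Suc: "summable (\<lambda>l. \<Sum>x\<in>X. m x * u x * Kpow (Suc l) f x)"
proof -
  have "summable (\<lambda>l. Kpow (Suc l) f x)" if "x \<in> X" for x
    using summable_Suc_iff[of "\<lambda>k. Kpow k f x"] summable_Kpow_centered[OF that] by simp
  then show ?thesis by (intro summable_sum summable_mult) simp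
qed

lemma sum_stationary_mul_poisson:
  "(\<Sum>x\<in>X. m x * u x * poisson f x)
     = (\<Sum>x\<in>X. m x * u x * f x) + (\<Sum>l. \<Sum>x\<in>X. m x * u x * Kpow (Suc l) f x)"
proof -
  define b where "b k = (\<Sum>x\<in>X. m x * u x * Kpow k f x)" for k
  have "summable b"
    unfolding b_def by (intro summable_sum summable_mult summable_Kpow_centered)
  have "(\<Sum>x\<in>X. m x * u x * poisson f x) = (\<Sum>x\<in>X. \<Sum>k. m x * u x * Kpow k f x)"
    unfolding poisson_def by (intro sum.cong refl suminf_mult[symmetric] summable_Kpow_centered)
  also have "\<dots> = suminf b"
    unfolding b_def by (intro suminf_sum[symmetric] summable_mult summable_Kpow_centered)
  also have "\<dots> = b 0 + (\<Sum>l. b (Suc l))"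
    using suminf_split_head[OF \<open>summable b\<close>] by simp
  finally show ?thesis
    unfolding b_def by (simp add: Kpow_0 cong: sum.cong)
qed

end

lemma incr_cov_eq:
  assumes "x \<in> X"
  shows "incr_cov f h x
    = Kapp (\<lambda>y. poisson f y * poisson h y) x - Kapp (poisson f) x * Kapp (poisson h) x"
proof -
  define p q where "p = Kapp (poisson f) x" and "q = Kapp (poisson h) x"
  have "incr_cov f h x = (\<Sum>y\<in>X. K x y * (poisson f y * poisson h y)
      - q * (K x y * poisson f y) - p * (K x y * poisson h y) + p * q * K x y)"
    unfolding incr_cov_def p_def[symmetric] q_def[symmetric] by (intro sum.cong) (auto simp: algebra_simps)
  also have "\<dots> = (\<Sum>y\<in>X. K x y * (poisson f y * poisson h y)) - q * (\<Sum>y\<in>X. K x y * poisson f y)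
      - p * (\<Sum>y\<in>X. K x y * poisson h y) + p * q * (\<Sum>y\<in>X. K x y)"
    by (simp add: sum.distrib sum_subtractf sum_distrib_left)
  also have "\<dots> = Kapp (\<lambda>y. poisson f y * poisson h y) x - p * q"
    using K_row_sum[OF assms] unfolding p_def q_def Kapp_def by simp
  finally show ?thesis unfolding p_def q_def .
qed

lemma sum_stationary_incr_cov:
  assumes "\<And>y. y \<in> X \<Longrightarrow> \<bar>f y\<bar> \<le> M" and "(\<Sum>y\<in>X. m y * f y) = 0"
    and "\<And>y. y \<in> X \<Longrightarrow> \<bar>h y\<bar> \<le> M" and "(\<Sum>y\<in>X. m y * h y) = 0"
  shows "(\<Sum>x\<in>X. m x * incr_cov f h x) = (\<Sum>x\<in>X. m x * f x * h x)
     + (\<Sum>l. \<Sum>x\<in>X. \<Sum>y\<in>X. m x * kpow X K (Suc l) x y * (f x * h y + f y * h x))"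
proof -
  note f = assms(1,2) and h = assms(3,4)
  have "(\<Sum>x\<in>X. m x * incr_cov f h x)
      = (\<Sum>x\<in>X. m x * (poisson f x * poisson h x))
        - (\<Sum>x\<in>X. m x * ((poisson f x - f x) * (poisson h x - h x)))"
    by (simp add: incr_cov_eq right_diff_distrib sum_subtractf sum_stationary_Kapp
        poisson_equation[OF f] poisson_equation[OF h] cong: sum.cong)
  also have "\<dots> = (\<Sum>x\<in>X. m x * f x * poisson h x) + (\<Sum>x\<in>X. m x * h x * poisson f x)
      - (\<Sum>x\<in>X. m x * f x * h x)"
    by (simp add: sum_subtractf sum.distrib[symmetric] algebra_simps)
  also have "\<dots> = (\<Sum>x\<in>X. m x * f x * h x)
      + ((\<Sum>l. \<Sum>x\<in>X. m x * f x * Kpow (Suc l) h x) + (\<Sum>l. \<Sum>x\<in>X. m x * h x * Kpow (Suc l) f x))"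
    by (simp add: sum_stationary_mul_poisson[OF f] sum_stationary_mul_poisson[OF h])
       (simp add: ac_simps)
  also have "(\<Sum>l. \<Sum>x\<in>X. m x * f x * Kpow (Suc l) h x) + (\<Sum>l. \<Sum>x\<in>X. m x * h x * Kpow (Suc l) f x)
      = (\<Sum>l. \<Sum>x\<in>X. \<Sum>y\<in>X. m x * kpow X K (Suc l) x y * (f x * h y + f y * h x))"
  proof -
    have "(\<Sum>x\<in>X. m x * f x * Kpow (Suc l) h x) + (\<Sum>x\<in>X. m x * h x * Kpow (Suc l) f x)
        = (\<Sum>x\<in>X. \<Sum>y\<in>X. m x * kpow X K (Suc l) x y * (f x * h y + f y * h x))" for l
      by (simp add: Kpow_def sum_distrib_left distrib_left sum.distrib ac_simps)
    then show ?thesis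
      by (simp add: suminf_add[OF summable_stationary_Kpow_Suc[OF h] summable_stationary_Kpow_Suc[OF f]])
  qed
  finally show ?thesis .
qed

lemma incr_cov_abs_le:
  assumes "\<And>y. y \<in> X \<Longrightarrow> \<bar>f y\<bar> \<le> M" and "(\<Sum>y\<in>X. m y * f y) = 0"
    and "\<And>y. y \<in> X \<Longrightarrow> \<bar>h y\<bar> \<le> M" and "(\<Sum>y\<in>X. m y * h y) = 0"
    and x: "x \<in> X"
  shows "\<bar>incr_cov f h x\<bar> \<le> (8 * M * \<tau>)\<^sup>2"
proof -
  note f = assms(1,2) and h = assms(3,4)
  have incr_f: "\<bar>poisson f y - Kapp (poisson f) x\<bar> \<le> 8 * M * \<tau>" if "y \<in> X" for y
    using poisson_abs_le[OF f that] Kapp_abs_le[of x "poisson f", OF x poisson_abs_le[OF f]] by linarith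
  have incr_h: "\<bar>poisson h y - Kapp (poisson h) x\<bar> \<le> 8 * M * \<tau>" if "y \<in> X" for y
    using poisson_abs_le[OF h that] Kapp_abs_le[of x "poisson h", OF x poisson_abs_le[OF h]] by linarith
  have "\<bar>incr_cov f h x\<bar> = \<bar>Kapp (\<lambda>y. (poisson f y - Kapp (poisson f) x) * (poisson h y - Kapp (poisson h) x)) x\<bar>"
    unfolding incr_cov_def Kapp_def by (simp add: mult.assoc)
  also have "\<dots> \<le> (8 * M * \<tau>) * (8 * M * \<tau>)"
  proof (rule Kapp_abs_le[OF x])
    fix y assume "y \<in> X"
    then show "\<bar>(poisson f y - Kapp (poisson f) x) * (poisson h y - Kapp (poisson h) x)\<bar>
        \<le> (8 * M * \<tau>) * (8 * M * \<tau>)"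
      unfolding abs_mult using incr_f incr_h f_bound_nonneg[OF f x] by (intro mult_mono) auto
  qed
  finally show ?thesis by (simp add: power2_eq_square)
qed

lemma law_l1_dist_le:
  assumes "\<And>x. x \<in> X \<Longrightarrow> 0 \<le> \<nu> x" and "(\<Sum>x\<in>X. \<nu> x) = 1"
  shows "(\<Sum>y\<in>X. \<bar>(\<Sum>x\<in>X. \<nu> x * kpow X K k x y) - m y\<bar>) \<le> 2 * (1/4) ^ (k div \<tau>)"
proof -
  have "(\<Sum>y\<in>X. \<bar>(\<Sum>x\<in>X. \<nu> x * kpow X K k x y) - m y\<bar>)
      = (\<Sum>y\<in>X. \<bar>\<Sum>x\<in>X. \<nu> x * (kpow X K k x y - m y)\<bar>)"
    by (simp add: right_diff_distrib sum_subtractf sum_distrib_right[symmetric] assms(2))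
  also have "\<dots> \<le> (\<Sum>x\<in>X. \<nu> x * (\<Sum>y\<in>X. \<bar>kpow X K k x y - m y\<bar>))"
    unfolding sum_distrib_left by (subst sum.swap, intro sum_mono order_trans[OF sum_abs])
       (simp add: abs_mult assms(1))
  also have "\<dots> \<le> (\<Sum>x\<in>X. \<nu> x * (2 * (1/4) ^ (k div \<tau>)))"
    by (intro sum_mono mult_left_mono mixing_l1 assms(1))
  also have "\<dots> = 2 * (1/4) ^ (k div \<tau>)"
    by (simp add: sum_distrib_right[symmetric] assms(2))
  finally show ?thesis .
qed

end

section \<open>Entrywise bounds for congruences\<close>

lemma abs_row_apply_le:
  fixes B :: "'i \<Rightarrow> 'i \<Rightarrow> real"
  assumes "\<forall>j\<in>I. \<bar>v j\<bar> \<le> 1"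
  shows "\<bar>\<Sum>j\<in>I. B i j * v j\<bar> \<le> (\<Sum>j\<in>I. \<bar>B i j\<bar>)"
  by (rule order_trans[OF sum_abs]) (use assms in \<open>auto simp: abs_mult intro!: sum_mono mult_left_le\<close>)

lemma row_abs_sum_le_linf_opnorm:
  fixes B :: "'i \<Rightarrow> 'i \<Rightarrow> real"
  assumes "finite I" and "i \<in> I"
  shows "(\<Sum>j\<in>I. \<bar>B i j\<bar>) \<le> linf_opnorm I B"
proof -
  define row_max where "row_max v = Max ((\<lambda>i. \<bar>\<Sum>j\<in>I. B i j * v j\<bar>) ` I)" for v
  have bdd: "bdd_above (row_max ` {v. \<forall>i\<in>I. \<bar>v i\<bar> \<le> 1})"
  proof (rule bdd_aboveI2)
    fix v :: "'i \<Rightarrow> real" assume "v \<in> {v. \<forall>i\<in>I. \<bar>v i\<bar> \<le> 1}"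
    then show "row_max v \<le> (\<Sum>i\<in>I. \<Sum>j\<in>I. \<bar>B i j\<bar>)"
      unfolding row_max_def using assms
      by (subst Max_le_iff) (auto intro!: order_trans[OF abs_row_apply_le] member_le_sum sum_nonneg)
  qed
  have "B i j * sgn (B i j) = \<bar>B i j\<bar>" for j
    by (simp add: sgn_if)
  then have "(\<Sum>j\<in>I. \<bar>B i j\<bar>) = \<bar>\<Sum>j\<in>I. B i j * sgn (B i j)\<bar>"
    by (simp add: sum_nonneg)
  also have "\<dots> \<le> row_max (\<lambda>j. sgn (B i j))"
    unfolding row_max_def using assms by (intro Max_ge) auto
  also have "\<dots> \<le> Sup (row_max ` {v. \<forall>i\<in>I. \<bar>v i\<bar> \<le> 1})"
    by (intro cSup_upper bdd) (simp add: abs_sgn_eq)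
  finally show ?thesis unfolding linf_opnorm_def row_max_def .
qed

lemma congr_abs_le:
  fixes B M :: "'i \<Rightarrow> 'i \<Rightarrow> real"
  assumes "finite I" and "i \<in> I" and "j \<in> I" and "\<And>p q. p \<in> I \<Longrightarrow> q \<in> I \<Longrightarrow> \<bar>M p q\<bar> \<le> c"
  shows "\<bar>congr I B M i j\<bar> \<le> (linf_opnorm I B)\<^sup>2 * c"
proof -
  have "0 \<le> c" using assms(2,4) by (meson abs_ge_zero order_trans)
  have "\<bar>congr I B M i j\<bar> \<le> (\<Sum>p\<in>I. \<Sum>q\<in>I. \<bar>B i p\<bar> * c * \<bar>B j q\<bar>)"
    unfolding congr_def using assms(4)
    by (intro order_trans[OF sum_abs] sum_mono)
       (auto simp: abs_mult intro!: order_trans[OF sum_abs] sum_mono mult_left_mono mult_right_mono)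
  also have "\<dots> = (\<Sum>p\<in>I. \<bar>B i p\<bar> * (c * (\<Sum>q\<in>I. \<bar>B j q\<bar>)))"
    by (simp add: sum_distrib_left mult.assoc)
  also have "\<dots> = (\<Sum>p\<in>I. \<bar>B i p\<bar>) * (c * (\<Sum>q\<in>I. \<bar>B j q\<bar>))"
    by (simp add: sum_distrib_right)
  also have "\<dots> = c * ((\<Sum>p\<in>I. \<bar>B i p\<bar>) * (\<Sum>q\<in>I. \<bar>B j q\<bar>))"
    by (simp only: mult_ac)
  also have "\<dots> \<le> c * (linf_opnorm I B * linf_opnorm I B)"
  proof -
    have row_i: "(\<Sum>p\<in>I. \<bar>B i p\<bar>) \<le> linf_opnorm I B"
      and row_j: "(\<Sum>q\<in>I. \<bar>B j q\<bar>) \<le> linf_opnorm I B"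
      using assms(1-3) by (simp_all add: row_abs_sum_le_linf_opnorm)
    have row_j_nonneg: "0 \<le> (\<Sum>q\<in>I. \<bar>B j q\<bar>)"
      by (simp add: sum_nonneg)
    then have "0 \<le> linf_opnorm I B"
      using row_j by linarith
    with row_i row_j row_j_nonneg
    have "(\<Sum>p\<in>I. \<bar>B i p\<bar>) * (\<Sum>q\<in>I. \<bar>B j q\<bar>) \<le> linf_opnorm I B * linf_opnorm I B"
      by (intro mult_mono)
    then show ?thesis
      using \<open>0 \<le> c\<close> by (rule mult_left_mono)
  qed
  finally show ?thesis by (simp add: power2_eq_square mult.commute)
qed

lemma congr_diff: "congr I B M i j - congr I B N i j = congr I B (\<lambda>p q. M p q - N p q) i j"
  unfolding congr_def by (simp add: sum_subtractf[symmetric] algebra_simps)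

lemma sum_congr_geometric_abs_le:
  fixes B :: "'i \<Rightarrow> 'i \<Rightarrow> real" and D :: "nat \<Rightarrow> 'i \<Rightarrow> 'i \<Rightarrow> real"
  assumes "finite I" and "i \<in> I" and "j \<in> I" and "0 < \<tau>"
    and D_le: "\<And>k p q. p \<in> I \<Longrightarrow> q \<in> I \<Longrightarrow> \<bar>D k p q\<bar> \<le> c * (1/4) ^ ((k - 1) div \<tau>)"
  shows "\<bar>\<Sum>k=1..n. congr I B (D k) i j\<bar> \<le> 2 * real \<tau> * c * (linf_opnorm I B)\<^sup>2"
proof -
  have "0 \<le> c"
    using D_le[OF assms(2,2), of 0] by (simp add: order_trans[OF abs_ge_zero])
  have "\<bar>\<Sum>k=1..n. congr I B (D k) i j\<bar> \<le> (\<Sum>k=1..n. (linf_opnorm I B)\<^sup>2 * (c * (1/4) ^ ((k - 1) div \<tau>)))"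
    using assms(1-3) D_le by (intro order_trans[OF sum_abs] sum_mono congr_abs_le)
  also have "\<dots> = (linf_opnorm I B)\<^sup>2 * c * (\<Sum>k<n. (1/4) ^ (k div \<tau>))"
    by (simp add: sum.atLeast1_atMost_eq sum_distrib_left mult.assoc)
  also have "\<dots> \<le> (linf_opnorm I B)\<^sup>2 * c * (2 * real \<tau>)"
    using \<open>0 \<le> c\<close> by (intro mult_left_mono sum_quarter_pow_div_le \<open>0 < \<tau>\<close> mult_nonneg_nonneg) simp_all
  finally show ?thesis by (simp only: mult_ac)
qed

lemma chnorm_le:
  assumes "finite I" and "I \<noteq> {}" and "\<And>i j. i \<in> I \<Longrightarrow> j \<in> I \<Longrightarrow> \<bar>M i j\<bar> \<le> c"
  shows "chnorm I M \<le> c"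
  unfolding chnorm_def using assms by (subst Max_le_iff) auto

section \<open>The Q-learning chain\<close>

lemma sum_Xset: "(\<Sum>x\<in>Xset S A. F x) = (\<Sum>s\<in>S. \<Sum>a\<in>A. \<Sum>s'\<in>S. F (s, a, s'))"
  unfolding Xset_def by (simp add: sum.cartesian_product)

lemma optimal_Q_Bellman_bounds:
  assumes mdp: "finite_mdp S A P r \<gamma> pib" and opt: "is_optimal_Q S A P r \<gamma> Q"
    and between: "\<And>s a. s \<in> S \<Longrightarrow> a \<in> A \<Longrightarrow> L \<le> Q s a \<and> Q s a \<le> U"
    and "s \<in> S" and "a \<in> A"
  shows "\<gamma> * L \<le> Q s a \<and> Q s a \<le> 1 + \<gamma> * U"
proof -
  define E where "E = (\<Sum>s'\<in>S. P s a s' * Vstar A Q s')"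
  have "L \<le> Vstar A Q s' \<and> Vstar A Q s' \<le> U" if "s' \<in> S" for s'
    unfolding Vstar_def using mdp between that by (intro Max_image_between) (auto simp: finite_mdp_def)
  then have "L \<le> E" "E \<le> U"
    unfolding E_def using mdp assms(4,5) by (auto intro!: sum_convex_comb_between[THEN conjunct1]
        sum_convex_comb_between[THEN conjunct2] simp: finite_mdp_def)
  then have "\<gamma> * L \<le> \<gamma> * E" "\<gamma> * E \<le> \<gamma> * U"
    using mdp by (simp_all add: mult_left_mono finite_mdp_def)
  moreover have "Q s a = r s a + \<gamma> * E" and "0 \<le> r s a" "r s a \<le> 1"
    using opt mdp assms(4,5) unfolding is_optimal_Q_def Vstar_def E_def finite_mdp_def by auto
  ultimately show ?thesis by linarith
qed

text \<open>Evaluate the Bellman bounds at a maximiser and at a minimiser of Q*.\<close>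
lemma optimal_Q_bounds:
  assumes mdp: "finite_mdp S A P r \<gamma> pib" and opt: "is_optimal_Q S A P r \<gamma> Q"
    and "s \<in> S" and "a \<in> A"
  shows "0 \<le> Q s a \<and> Q s a \<le> 1 / (1 - \<gamma>)"
proof -
  have fin: "finite (S \<times> A)" "S \<times> A \<noteq> {}" and "\<gamma> < 1"
    using mdp unfolding finite_mdp_def by auto
  define U L where "U = Max ((\<lambda>(s, a). Q s a) ` (S \<times> A))" and "L = Min ((\<lambda>(s, a). Q s a) ` (S \<times> A))"
  have between: "L \<le> Q s a \<and> Q s a \<le> U" if "s \<in> S" "a \<in> A" for s a
    unfolding U_def L_def using fin that by (auto intro!: Max_ge Min_le)
  have "U \<in> (\<lambda>(s, a). Q s a) ` (S \<times> A)" and "L \<in> (\<lambda>(s, a). Q s a) ` (S \<times> A)"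
    unfolding U_def L_def using fin by (intro Max_in Min_in finite_imageI; simp)+
  then obtain s1 a1 s2 a2 where "s1 \<in> S" "a1 \<in> A" "U = Q s1 a1" and "s2 \<in> S" "a2 \<in> A" "L = Q s2 a2"
    by auto
  then have "U \<le> 1 + \<gamma> * U" and "\<gamma> * L \<le> L"
    using optimal_Q_Bellman_bounds[OF mdp opt between] by simp_all
  moreover have "U * (1 - \<gamma>) = U - \<gamma> * U" and "(1 - \<gamma>) * L = L - \<gamma> * L"
    by (simp_all add: algebra_simps)
  ultimately have "U * (1 - \<gamma>) \<le> 1" and "0 \<le> (1 - \<gamma>) * L"
    by linarith+
  have "U \<le> 1 / (1 - \<gamma>)"
    using \<open>U * (1 - \<gamma>) \<le> 1\<close> \<open>\<gamma> < 1\<close> by (simp add: pos_le_divide_eq)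
  moreover have "0 \<le> L"
    using \<open>0 \<le> (1 - \<gamma>) * L\<close> \<open>\<gamma> < 1\<close> by (auto simp: zero_le_mult_iff)
  ultimately show ?thesis
    using between[OF assms(3,4)] by linarith
qed

lemma Vstar_bounds:
  assumes "finite_mdp S A P r \<gamma> pib" and "is_optimal_Q S A P r \<gamma> Q" and "s \<in> S"
  shows "0 \<le> Vstar A Q s \<and> Vstar A Q s \<le> 1 / (1 - \<gamma>)"
  unfolding Vstar_def using assms optimal_Q_bounds[OF assms(1,2)]
  by (intro Max_image_between) (auto simp: finite_mdp_def)

lemma eps_abs_le:
  assumes mdp: "finite_mdp S A P r \<gamma> pib" and opt: "is_optimal_Q S A P r \<gamma> Q" and "x \<in> Xset S A"
  shows "\<bar>eps A r \<gamma> Q x j\<bar> \<le> 1 / (1 - \<gamma>)"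
proof -
  obtain s a s' where x: "x = (s, a, s')" and "s \<in> S" "a \<in> A" "s' \<in> S"
    using assms(3) unfolding Xset_def by auto
  have "0 \<le> r s a" "r s a \<le> 1" "0 < \<gamma>" "\<gamma> < 1"
    using mdp \<open>s \<in> S\<close> \<open>a \<in> A\<close> unfolding finite_mdp_def by auto
  have "0 \<le> Q s a" "Q s a \<le> 1 / (1 - \<gamma>)"
    using optimal_Q_bounds[OF mdp opt \<open>s \<in> S\<close> \<open>a \<in> A\<close>] by auto
  have V: "0 \<le> Vstar A Q s'" "Vstar A Q s' \<le> 1 / (1 - \<gamma>)"
    using Vstar_bounds[OF mdp opt \<open>s' \<in> S\<close>] by auto
  have "0 \<le> \<gamma> * Vstar A Q s'"
    using V \<open>0 < \<gamma>\<close> by simp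
  moreover have "\<gamma> * Vstar A Q s' \<le> \<gamma> * (1 / (1 - \<gamma>))"
    using V \<open>0 < \<gamma>\<close> by (intro mult_left_mono) auto
  moreover have "1 + \<gamma> * (1 / (1 - \<gamma>)) = 1 / (1 - \<gamma>)"
    using \<open>\<gamma> < 1\<close> by (simp add: field_simps)
  ultimately have "\<bar>r s a + \<gamma> * Vstar A Q s' - Q s a\<bar> \<le> 1 / (1 - \<gamma>)"
    using \<open>0 \<le> r s a\<close> \<open>r s a \<le> 1\<close> \<open>0 \<le> Q s a\<close> \<open>Q s a \<le> 1 / (1 - \<gamma>)\<close>
    unfolding abs_le_iff by linarith
  moreover have "0 \<le> 1 / (1 - \<gamma>)"
    using \<open>\<gamma> < 1\<close> by simp
  ultimately show ?thesis
    unfolding eps_def x by simp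
qed

lemma bellman_residual_mean_zero:
  assumes mdp: "finite_mdp S A P r \<gamma> pib" and opt: "is_optimal_Q S A P r \<gamma> Q"
    and "s \<in> S" and "a \<in> A"
  shows "(\<Sum>s'\<in>S. P s a s' * (r s a + \<gamma> * Vstar A Q s' - Q s a)) = 0"
proof -
  have "(\<Sum>s'\<in>S. P s a s' * (r s a + \<gamma> * Vstar A Q s' - Q s a))
      = r s a * (\<Sum>s'\<in>S. P s a s') + \<gamma> * (\<Sum>s'\<in>S. P s a s' * Vstar A Q s') - Q s a * (\<Sum>s'\<in>S. P s a s')"
    by (simp add: sum.distrib sum_subtractf sum_distrib_left sum_distrib_right algebra_simps)
  then show ?thesis
    using mdp opt assms(3,4) unfolding finite_mdp_def is_optimal_Q_def Vstar_def by auto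
qed

lemma eps_centered:
  assumes "finite_mdp S A P r \<gamma> pib" and "is_optimal_Q S A P r \<gamma> Q"
  shows "(\<Sum>x\<in>Xset S A. mubar P \<mu> x * eps A r \<gamma> Q x j) = 0"
proof -
  have "(\<Sum>s'\<in>S. mubar P \<mu> (s, a, s') * eps A r \<gamma> Q (s, a, s') j) = 0" if "s \<in> S" "a \<in> A" for s a
  proof (cases "j = (s, a)")
    case True
    then have "(\<Sum>s'\<in>S. mubar P \<mu> (s, a, s') * eps A r \<gamma> Q (s, a, s') j)
        = \<mu> (s, a) * (\<Sum>s'\<in>S. P s a s' * (r s a + \<gamma> * Vstar A Q s' - Q s a))"
      by (simp add: mubar_def eps_def sum_distrib_left mult.assoc)
    then show ?thesis
      using bellman_residual_mean_zero[OF assms that] by simp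
  qed (simp add: eps_def)
  then show ?thesis
    unfolding sum_Xset by simp
qed

lemma Pbar_row_sum:
  assumes mdp: "finite_mdp S A P r \<gamma> pib" and "x \<in> Xset S A"
  shows "(\<Sum>y\<in>Xset S A. Pbar P pib x y) = 1"
proof -
  obtain s1 a1 s1' where x: "x = (s1, a1, s1')" and "s1' \<in> S"
    using assms(2) unfolding Xset_def by auto
  have "(\<Sum>y\<in>Xset S A. Pbar P pib x y)
      = (\<Sum>s\<in>S. if s = s1' then (\<Sum>a\<in>A. pib s a * (\<Sum>s'\<in>S. P s a s')) else 0)"
    unfolding sum_Xset x Pbar_def by (intro sum.cong refl) (auto simp: sum_distrib_left)
  also have "\<dots> = (\<Sum>a\<in>A. pib s1' a * (\<Sum>s'\<in>S. P s1' a s'))"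
    using mdp \<open>s1' \<in> S\<close> unfolding finite_mdp_def by (simp add: sum.delta')
  also have "\<dots> = 1"
    using mdp \<open>s1' \<in> S\<close> unfolding finite_mdp_def by simp
  finally show ?thesis .
qed

lemma mubar_stationary:
  assumes mdp: "finite_mdp S A P r \<gamma> pib" and st: "stationary_sa S A P pib \<mu>" and "y \<in> Xset S A"
  shows "(\<Sum>x\<in>Xset S A. mubar P \<mu> x * Pbar P pib x y) = mubar P \<mu> y"
proof -
  obtain s2 a2 s2' where y: "y = (s2, a2, s2')" and "s2 \<in> S" "a2 \<in> A"
    using assms(3) unfolding Xset_def by auto
  have "(\<Sum>x\<in>Xset S A. mubar P \<mu> x * Pbar P pib x y)
      = (\<Sum>s\<in>S. \<Sum>a\<in>A. \<mu> (s, a) * P s a s2 * pib s2 a2) * P s2 a2 s2'"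
    unfolding sum_Xset y Pbar_def mubar_def sum_distrib_right
    using mdp \<open>s2 \<in> S\<close> unfolding finite_mdp_def
    by (intro sum.cong refl) (simp add: if_distrib sum.delta mult.assoc cong: if_cong)
  also have "\<dots> = (\<Sum>(s, a)\<in>S \<times> A. \<mu> (s, a) * P s a s2 * pib s2 a2) * P s2 a2 s2'"
    by (simp only: sum.cartesian_product)
  also have "\<dots> = mubar P \<mu> y"
    using st \<open>s2 \<in> S\<close> \<open>a2 \<in> A\<close> unfolding stationary_sa_def y mubar_def by simp
  finally show ?thesis .
qed

lemma mixing_chain_Pbar:
  assumes mdp: "finite_mdp S A P r \<gamma> pib" and st: "stationary_sa S A P pib \<mu>"
    and mix: "mixing S A P pib \<mu> tmix"
  shows "mixing_chain (Xset S A) (Pbar P pib) (mubar P \<mu>) tmix"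
proof
  show "finite (Xset S A)"
    using mdp unfolding finite_mdp_def Xset_def by simp
  show "0 \<le> Pbar P pib x y" if "x \<in> Xset S A" "y \<in> Xset S A" for x y
    using mdp that unfolding finite_mdp_def Xset_def Pbar_def by (auto split: prod.splits)
  show "(\<Sum>y\<in>Xset S A. Pbar P pib x y) = 1" if "x \<in> Xset S A" for x
    by (rule Pbar_row_sum[OF mdp that])
  show "(\<Sum>x\<in>Xset S A. mubar P \<mu> x * Pbar P pib x y) = mubar P \<mu> y" if "y \<in> Xset S A" for y
    by (rule mubar_stationary[OF mdp st that])
  show "(\<Sum>y\<in>Xset S A. \<bar>kpow (Xset S A) (Pbar P pib) t x y - mubar P \<mu> y\<bar>) \<le> 2 * (1/4) ^ (t div tmix)"
    if "x \<in> Xset S A" for t x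
    using mix that unfolding mixing_def dtv_def by (auto simp: mult.commute)
  show "0 < tmix"
    using mix unfolding mixing_def by simp
qed

lemma Ek_minus_Sigma_eps_abs_le:
  assumes mdp: "finite_mdp S A P r \<gamma> pib" and opt: "is_optimal_Q S A P r \<gamma> Q"
    and st: "stationary_sa S A P pib \<mu>" and mix: "mixing S A P pib \<mu> tmix"
    and \<nu>: "is_distr (Xset S A) \<nu>"
  shows "\<bar>Ek S A P r \<gamma> pib Q \<nu> k p q - Sigma_eps S A P r \<gamma> pib Q \<mu> p q\<bar>
    \<le> 128 * (real tmix / (1 - \<gamma>))\<^sup>2 * (1/4) ^ ((k - 1) div tmix)"
proof -
  interpret mixing_chain "Xset S A" "Pbar P pib" "mubar P \<mu>" tmix
    by (rule mixing_chain_Pbar[OF mdp st mix])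
  define f where "f i y = eps A r \<gamma> Q y i" for i y
  have bounded: "\<And>y. y \<in> Xset S A \<Longrightarrow> \<bar>f i y\<bar> \<le> 1 / (1 - \<gamma>)" for i
    unfolding f_def by (rule eps_abs_le[OF mdp opt])
  have centered: "(\<Sum>y\<in>Xset S A. mubar P \<mu> y * f i y) = 0" for i
    unfolding f_def by (rule eps_centered[OF mdp opt])
  note incr = bounded centered bounded centered
  have Ek_eq: "Ek S A P r \<gamma> pib Q \<nu> k p q
      = (\<Sum>x\<in>Xset S A. law S A P pib \<nu> (k - 1) x * incr_cov (f p) (f q) x)"
    unfolding Ek_def incr_cov_def Kapp_def poisson_def Kpow_def gfun_def Pg_def f_def
    by (simp add: sum_distrib_left mult.assoc)
  have Sigma_eps_eq: "Sigma_eps S A P r \<gamma> pib Q \<mu> p q = (\<Sum>x\<in>Xset S A. mubar P \<mu> x * incr_cov (f p) (f q) x)"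
    by (simp add: Sigma_eps_def sum_stationary_incr_cov[OF incr] f_def)
  have "\<bar>Ek S A P r \<gamma> pib Q \<nu> k p q - Sigma_eps S A P r \<gamma> pib Q \<mu> p q\<bar>
      \<le> (\<Sum>x\<in>Xset S A. \<bar>law S A P pib \<nu> (k - 1) x - mubar P \<mu> x\<bar>) * (8 * (1 / (1 - \<gamma>)) * tmix)\<^sup>2"
    unfolding Ek_eq Sigma_eps_eq by (rule abs_sum_mult_diff_le[OF incr_cov_abs_le[OF incr]])
  also have "\<dots> \<le> 2 * (1/4) ^ ((k - 1) div tmix) * (8 * (1 / (1 - \<gamma>)) * tmix)\<^sup>2"
    using \<nu> unfolding is_distr_def law_def by (intro mult_right_mono law_l1_dist_le) auto
  also have "\<dots> = 128 * (real tmix / (1 - \<gamma>))\<^sup>2 * (1/4) ^ ((k - 1) div tmix)"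
    by (simp add: power_mult_distrib power_divide)
  finally show ?thesis .
qed

lemma Sigma_n_minus_Sigma_inf:
  assumes "1 \<le> n"
  shows "Sigma_n S A P r \<gamma> pib Q \<mu> \<nu> n i j - Sigma_inf S A P r \<gamma> pib Q \<mu> i j
    = (\<Sum>k=1..n. congr (S \<times> A) (minv (S \<times> A) (Gmat A P \<gamma> Q \<mu>))
        (\<lambda>p q. Ek S A P r \<gamma> pib Q \<nu> k p q - Sigma_eps S A P r \<gamma> pib Q \<mu> p q) i j) / real n"
proof -
  have "Sigma_inf S A P r \<gamma> pib Q \<mu> i j = (\<Sum>k=1..n. Sigma_inf S A P r \<gamma> pib Q \<mu> i j) / real n"
    using assms by simp
  then show ?thesis
    unfolding Sigma_n_def by (simp add: Sigma_inf_def congr_diff[symmetric] sum_subtractf diff_divide_distrib)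
qed

lemma Sigma_n_minus_Sigma_inf_abs_le:
  assumes mdp: "finite_mdp S A P r \<gamma> pib" and opt: "is_optimal_Q S A P r \<gamma> Q"
    and st: "stationary_sa S A P pib \<mu>" and mix: "mixing S A P pib \<mu> tmix"
    and \<nu>: "is_distr (Xset S A) \<nu>" and "1 \<le> n" and "i \<in> S \<times> A" and "j \<in> S \<times> A"
  shows "\<bar>Sigma_n S A P r \<gamma> pib Q \<mu> \<nu> n i j - Sigma_inf S A P r \<gamma> pib Q \<mu> i j\<bar>
    \<le> 256 * (linf_opnorm (S \<times> A) (minv (S \<times> A) (Gmat A P \<gamma> Q \<mu>)))\<^sup>2 * (real tmix) ^ 3
        / (real n * (1 - \<gamma>)\<^sup>2)"
proof -
  let ?B = "minv (S \<times> A) (Gmat A P \<gamma> Q \<mu>)"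
  let ?D = "\<lambda>k p q. Ek S A P r \<gamma> pib Q \<nu> k p q - Sigma_eps S A P r \<gamma> pib Q \<mu> p q"
  have "finite (S \<times> A)" and "0 < tmix"
    using mdp mix unfolding finite_mdp_def mixing_def by auto
  have scale: "2 * t * (128 * (t / g)\<^sup>2) * M\<^sup>2 / m = 256 * M\<^sup>2 * t ^ 3 / (m * g\<^sup>2)" for t g M m :: real
    by (simp add: power_divide power3_eq_cube power2_eq_square mult_ac)
  have "\<bar>\<Sum>k=1..n. congr (S \<times> A) ?B (?D k) i j\<bar>
      \<le> 2 * real tmix * (128 * (real tmix / (1 - \<gamma>))\<^sup>2) * (linf_opnorm (S \<times> A) ?B)\<^sup>2"
    using \<open>finite (S \<times> A)\<close> assms(7,8) \<open>0 < tmix\<close> Ek_minus_Sigma_eps_abs_le[OF mdp opt st mix \<nu>]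
    by (rule sum_congr_geometric_abs_le)
  then have "\<bar>\<Sum>k=1..n. congr (S \<times> A) ?B (?D k) i j\<bar> / real n
      \<le> 2 * real tmix * (128 * (real tmix / (1 - \<gamma>))\<^sup>2) * (linf_opnorm (S \<times> A) ?B)\<^sup>2 / real n"
    by (rule divide_right_mono) simp
  then show ?thesis
    unfolding Sigma_n_minus_Sigma_inf[OF \<open>1 \<le> n\<close>] abs_divide abs_of_nat scale .
qed

theorem lemmaB6:
  shows "\<exists>C::real. \<forall>S A P r \<gamma> pib Q \<mu> tmix \<nu> (n::nat).
     finite_mdp S A P r \<gamma> pib \<and>
     is_optimal_Q S A P r \<gamma> Q \<and>
     stationary_sa S A P pib \<mu> \<and>
     mixing S A P pib \<mu> tmix \<and>
     unique_opt_policy S A Q \<and>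
     is_distr (Xset S A) \<nu> \<and>
     1 \<le> n
     \<longrightarrow> chnorm (S \<times> A) (\<lambda>i j. Sigma_n S A P r \<gamma> pib Q \<mu> \<nu> n i j - Sigma_inf S A P r \<gamma> pib Q \<mu> i j)
         \<le> C * (linf_opnorm (S \<times> A) (minv (S \<times> A) (Gmat A P \<gamma> Q \<mu>)))\<^sup>2 * (real tmix) ^ 3
             / (real n * (1 - \<gamma>)\<^sup>2)"
proof (intro exI[of _ 256] allI impI, elim conjE)
  fix S A P r \<gamma> pib Q \<mu> tmix \<nu> and n :: nat
  assume mdp: "finite_mdp S A P r \<gamma> pib" and "is_optimal_Q S A P r \<gamma> Q"
    and "stationary_sa S A P pib \<mu>" and "mixing S A P pib \<mu> tmix"
    and "unique_opt_policy S A Q" and "is_distr (Xset S A) \<nu>" and "1 \<le> n"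
  then have "\<bar>Sigma_n S A P r \<gamma> pib Q \<mu> \<nu> n i j - Sigma_inf S A P r \<gamma> pib Q \<mu> i j\<bar>
      \<le> 256 * (linf_opnorm (S \<times> A) (minv (S \<times> A) (Gmat A P \<gamma> Q \<mu>)))\<^sup>2 * (real tmix) ^ 3
        / (real n * (1 - \<gamma>)\<^sup>2)" if "i \<in> S \<times> A" and "j \<in> S \<times> A" for i j
    using that by (intro Sigma_n_minus_Sigma_inf_abs_le)
  moreover have "finite (S \<times> A)" and "S \<times> A \<noteq> {}"
    using mdp unfolding finite_mdp_def by auto
  ultimately show "chnorm (S \<times> A) (\<lambda>i j. Sigma_n S A P r \<gamma> pib Q \<mu> \<nu> n i j - Sigma_inf S A P r \<gamma> pib Q \<mu> i j)
      \<le> 256 * (linf_opnorm (S \<times> A) (minv (S \<times> A) (Gmat A P \<gamma> Q \<mu>)))\<^sup>2 * (real tmix) ^ 3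
        / (real n * (1 - \<gamma>)\<^sup>2)"
    by (intro chnorm_le)
qed

end
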